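(* Assume $(TJ)$. Let $B$ be a ball of radius $r>0$, let $0<\rho\le r$, $\lambda\in\mathbb R$ and $\psi=\lambda\mathbf 1_B$. Then for every non-negative $f\in\mathcal F^{(\rho)}\cap L^\infty(M,\mu)$ and every $p\ge1$, $$\mathcal E^{(\rho)}(e^{-\psi}f,\,e^{\psi}f^{2p-1})\ge\frac1p\,\mathcal E^{(\rho)}(f^p),$$ where $\mathcal E^{(\rho)}(u)=\mathcal E^{(\rho)}(u,u)$.
   Context: $(M,d,\mu)$ is an ultra-metric measure space: $M$ is locally compact and separable, $d$ is an ultra-metric ($d(x,y)\le\max\{d(x,z),d(z,y)\}$), $\mu$ is a Radon measure with full support. Balls are $B(x,r)=\{y: d(x,y)\le r\}$. Let $j$ be a symmetric Radon measure on $(M\times M)\setminus\mathrm{diag}$ with $j(B,B^c)<\infty$ for every ball $B$; $\mathcal E(f,g)=\iint(f(x)-f(y))(g(x)-g(y))\,dj(x,y)$, $\mathcal F$ is the closure, in the norm $\sqrt{\mathcal E(u)+\|u\|_2^2}$, of finite linear combinations of indicators of disjoint compact balls. Fixed $\beta>0$, $R_0\in(0,\operatorname{diam}M]$. Condition $(TJ)$: there is a transition kernel $J(x,dy)$ with $dj(x,y)=J(x,dy)\,d\mu(x)$ and a constant $C$ with $J(x,B(x,r)^c)\le Cr^{-\beta}$ for all $x\in M$, $r\in(0,R_0)$. Truncated form: for $\rho>0$, $\mathcal E^{(\rho)}(u,v)=\int_M\int_{B(x,\rho)}(u(x)-u(y))(v(x)-v(y))\,J(x,dy)\,d\mu(x)$.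 Under $(TJ)$, its closure $(\mathcal E^{(\rho)},\mathcal F^{(\rho)})$ is a regular Dirichlet form on $L^2(M,\mu)$ given by the same formula, with $\mathcal F^{(\rho)}=\mathcal F$. *)

theory Defs
  imports "HOL-Analysis.Analysis"
begin

definition ultrametric :: "('a::metric_space) itself \<Rightarrow> bool" where
  "ultrametric _ \<longleftrightarrow> (\<forall>x y z::'a. dist x y \<le> max (dist x z) (dist z y))"

definition ball_simple :: "('a::metric_space \<Rightarrow> real) \<Rightarrow> bool" where
  "ball_simple u \<longleftrightarrow> (\<exists>(n::nat) (c::nat \<Rightarrow> real) (x::nat \<Rightarrow> 'a) (r::nat \<Rightarrow> real).
      (\<forall>i<n. 0 < r i \<and> compact (cball (x i) (r i))) \<and>
      (\<forall>i<n. \<forall>k<n. i \<noteq> k \<longrightarrow> cball (x i) (r i) \<inter> cball (x k) (r k) = {}) \<and>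
      u = (\<lambda>z. \<Sum>i<n. c i * indicator (cball (x i) (r i)) z))"

text \<open>Energy \<open>\<E>(u) = \<integral>\<integral> (u x - u y)^2 dj(x,y)\<close> with \<open>dj(x,y) = J(x,dy) d\<mu>(x)\<close>
  (as an extended non-negative real).\<close>
definition energy :: "'a measure \<Rightarrow> ('a \<Rightarrow> 'a measure) \<Rightarrow> ('a \<Rightarrow> real) \<Rightarrow> ennreal" where
  "energy mu J u = (\<integral>\<^sup>+x. (\<integral>\<^sup>+y. ennreal ((u x - u y)^2) \<partial>(J x)) \<partial>mu)"

text \<open>The domain \<open>\<F>\<close>: closure of \<open>ball_simple\<close> functions in the norm
  \<open>sqrt(\<E>(u) + \<parallel>u\<parallel>_2^2)\<close>, i.e. \<open>L^2\<close>-limits of \<open>\<E>\<close>-Cauchy sequences of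
  \<open>ball_simple\<close> functions.\<close>
definition domF :: "'a::metric_space measure \<Rightarrow> ('a \<Rightarrow> 'a measure) \<Rightarrow> ('a \<Rightarrow> real) set" where
  "domF mu J = {u. u \<in> borel_measurable mu \<and> integrable mu (\<lambda>x. (u x)^2) \<and>
      (\<exists>v::nat \<Rightarrow> 'a \<Rightarrow> real. (\<forall>n. ball_simple (v n)) \<and>
         ((\<lambda>n. \<integral>\<^sup>+x. ennreal ((v n x - u x)^2) \<partial>mu) \<longlonglongrightarrow> 0) \<and>
         (\<forall>e>0. \<exists>N. \<forall>m\<ge>N. \<forall>n\<ge>N. energy mu J (\<lambda>z. v m z - v n z) < ennreal e))}"

definition Etr :: "'a::metric_space measure \<Rightarrow> ('a \<Rightarrow> 'a measure) \<Rightarrow> real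
    \<Rightarrow> ('a \<Rightarrow> real) \<Rightarrow> ('a \<Rightarrow> real) \<Rightarrow> real" where
  "Etr mu J \<rho> u v = (\<integral>x. (\<integral>y. indicator (cball x \<rho>) y * ((u x - u y) * (v x - v y)) \<partial>(J x)) \<partial>mu)"

end

theory Submission
  imports Defs "HOL-Probability.Probability"
begin

text \<open>
  In an ultrametric space, points at distance at most \<open>\<rho> \<le> r\<close> lie either both inside or both
  outside a ball of radius \<open>r\<close>. So on the domain of integration of \<open>\<E>\<^sup>(\<^sup>\<rho>\<^sup>)\<close> the weights
  \<open>exp (- \<psi>)\<close> and \<open>exp \<psi>\<close> cancel, and the left-hand side is \<open>\<E>\<^sup>(\<^sup>\<rho>\<^sup>)(f, f powr (2p - 1))\<close>.
  The claim then follows by integrating the pointwise inequality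
  \<open>(a powr p - b powr p)\<^sup>2 \<le> p (a - b) (a powr (2p - 1) - b powr (2p - 1))\<close> for \<open>a, b \<ge> 0\<close>,
  a consequence of the convexity of \<open>t powr p\<close>.

  Condition (TJ) is needed only to make the inner integrals measurable in \<open>x\<close>: the restrictions
  of \<open>J(x, \<cdot>)\<close> to the complement of \<open>B(x, s)\<close> are uniformly finite, hence after rescaling form a
  sub-probability kernel, and the inner integral is their increasing limit as \<open>s \<rightarrow> 0\<close>.
\<close>

section \<open>Elementary inequalities for powers\<close>

lemma powr_eq_powr_diff_one_mult:
  fixes x p :: real
  assumes "0 \<le> x"
  shows "x powr p = x powr (p - 1) * x"
  using assms by (cases "x = 0") (simp_all add: powr_diff)

lemma powr_two_mult_diff_one:
  fixes x p :: real
  assumes "0 \<le> x"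
  shows "x powr (2 * p - 1) = (x powr (p - 1))\<^sup>2 * x"
proof -
  have "x powr (2 * p - 1) = x powr (2 * p - 1 - 1) * x"
    by (rule powr_eq_powr_diff_one_mult[OF assms])
  also have "x powr (2 * p - 1 - 1) = (x powr (p - 1))\<^sup>2"
    by (simp add: power2_eq_square powr_add[symmetric])
  finally show ?thesis .
qed

lemma powr_diff_le_tangent:
  fixes a b p :: real
  assumes "0 < a" "0 \<le> b" "1 \<le> p"
  shows "a powr p - b powr p \<le> p * a powr (p - 1) * (a - b)"
proof (cases "b = 0")
  case True
  have "0 \<le> (p - 1) * (a powr (p - 1) * a)" using assms by simp
  then show ?thesis
    using True powr_eq_powr_diff_one_mult[of a p] assms by (simp add: algebra_simps)
next
  case False
  then have "b > 0" using assms by simp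
  then have "b powr p - a powr p \<ge> (p * a powr (p - 1)) * (b - a)"
    using assms powr_convex[OF assms(3)]
    by (intro convex_on_imp_above_tangent[where A="{0<..}"])
       (auto simp: interior_open intro!: derivative_eq_intros)
  then show ?thesis by (simp add: algebra_simps)
qed

lemma mult_diff_powr_le_powr_diff_sq:
  fixes a b p :: real
  assumes "0 \<le> a" "0 \<le> b"
  shows "(a - b) * (a powr (2 * p - 1) - b powr (2 * p - 1)) \<le> (a powr p - b powr p)\<^sup>2"
proof -
  have "0 \<le> (a powr (p - 1) - b powr (p - 1))\<^sup>2 * a * b" using assms by simp
  then show ?thesis
    unfolding powr_two_mult_diff_one[OF assms(1)] powr_two_mult_diff_one[OF assms(2)]
      powr_eq_powr_diff_one_mult[OF assms(1), of p] powr_eq_powr_diff_one_mult[OF assms(2), of p]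
    by (simp add: power2_eq_square algebra_simps)
qed

lemma powr_diff_sq_le_mult_diff_powr:
  fixes a b p :: real
  assumes "0 \<le> a" "0 \<le> b" "1 \<le> p"
  shows "(a powr p - b powr p)\<^sup>2 \<le> p * ((a - b) * (a powr (2 * p - 1) - b powr (2 * p - 1)))"
proof -
  have ordered: "(a powr p - b powr p)\<^sup>2 \<le> p * ((a - b) * (a powr (2 * p - 1) - b powr (2 * p - 1)))"
    if "0 \<le> b" "b < a" for a b
  proof -
    define A B where "A = a powr (p - 1)" and "B = b powr (p - 1)"
    have a: "a powr p = A * a" "a powr (2 * p - 1) = A * A * a"
      using that powr_eq_powr_diff_one_mult[of a p] powr_two_mult_diff_one[of a p]
      by (simp_all add: A_def power2_eq_square)
    have b: "b powr p = B * b" "b powr (2 * p - 1) = B * B * b"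
      using that powr_eq_powr_diff_one_mult[of b p] powr_two_mult_diff_one[of b p]
      by (simp_all add: B_def power2_eq_square)
    have BA: "B \<le> A" "0 \<le> B"
      unfolding A_def B_def using that assms(3) by (auto intro: powr_mono2)
    define D where "D = A * a - B * b"
    have D: "0 \<le> D" "D \<le> p * A * (a - b)"
      using powr_diff_le_tangent[of a b p] that assms(3) BA mult_mono[of B A b a]
      by (auto simp: D_def A_def a b)
    have "D\<^sup>2 \<le> (p * A * (a - b)) * D"
      using D by (simp add: power2_eq_square mult_right_mono)
    also have "\<dots> = (p * (a - b)) * (A * D)" by (simp add: algebra_simps)
    also have "\<dots> \<le> (p * (a - b)) * (A * A * a - B * B * b)"
    proof (intro mult_left_mono)
      have "B * B * b \<le> A * B * b"
        using BA that by (intro mult_right_mono) auto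
      then show "A * D \<le> A * A * a - B * B * b" by (simp add: D_def algebra_simps)
    qed (use that assms(3) in auto)
    finally show ?thesis by (simp add: D_def a b)
  qed
  show ?thesis
  proof (cases a b rule: linorder_cases)
    case less
    with ordered[of a b] assms show ?thesis by (simp add: power2_commute algebra_simps)
  qed (use ordered assms in auto)
qed

section \<open>Balls in ultrametric spaces\<close>

lemma ultrametric_cball_eq:
  fixes x y :: "'a::metric_space"
  assumes ultra: "ultrametric TYPE('a)" and y: "y \<in> cball x s"
  shows "cball y s = cball x s"
proof (intro set_eqI iffI)
  have ultra_dist: "dist a b \<le> max (dist a c) (dist c b)" for a b c :: 'a
    using ultra unfolding ultrametric_def by blast
  fix z
  show "z \<in> cball x s" if "z \<in> cball y s"
    using that y ultra_dist[of x z y] by auto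
  show "z \<in> cball y s" if "z \<in> cball x s"
    using that y ultra_dist[of y z x] by (auto simp: dist_commute)
qed

lemma ultrametric_indicator_cball_eq:
  fixes x y z :: "'a::metric_space"
  assumes ultra: "ultrametric TYPE('a)" and xy: "dist x y \<le> r"
  shows "indicator (cball z r) x = (indicator (cball z r) y :: real)"
proof -
  have "y \<in> cball x r" "x \<in> cball y r" using xy by (simp_all add: dist_commute)
  then have "x \<in> cball z r \<longleftrightarrow> y \<in> cball z r"
    using ultrametric_cball_eq[OF ultra, of x z r] ultrametric_cball_eq[OF ultra, of y z r] by blast
  then show ?thesis by (simp add: indicator_def)
qed

section \<open>Measurability of integrals against the jump kernel\<close>

lemma measurable_emeasure_Diff_cball:
  fixes J :: "'a::{metric_space,second_countable_topology} \<Rightarrow> 'a measure"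
  assumes ultra: "ultrametric TYPE('a)"
    and J_kernel: "\<And>A. A \<in> sets borel \<Longrightarrow> (\<lambda>x. emeasure (J x) A) \<in> borel_measurable borel"
    and A: "A \<in> sets borel" and s: "0 < s"
  shows "(\<lambda>x. emeasure (J x) (A - cball x s)) \<in> borel_measurable borel"
proof -
  obtain D :: "'a set" where D: "countable D" "\<And>U. open U \<Longrightarrow> U \<noteq> {} \<Longrightarrow> \<exists>d\<in>D. d \<in> U"
    using countable_dense_exists by blast
  show ?thesis
  proof (rule measurable_piecewise_restrict[where C="(\<lambda>d. cball d s) ` D"])
    show "countable ((\<lambda>d. cball d s) ` D)" using D by simp
    show "\<Omega> \<inter> space borel \<in> sets borel" if "\<Omega> \<in> (\<lambda>d. cball d s) ` D" for \<Omega>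
      using that by auto
    show "space borel \<subseteq> \<Union> ((\<lambda>d. cball d s) ` D)"
    proof
      fix x :: 'a
      obtain d where "d \<in> D" "d \<in> ball x s" using D(2)[of "ball x s"] s by auto
      then show "x \<in> \<Union> ((\<lambda>d. cball d s) ` D)"
        using ultrametric_cball_eq[OF ultra, of d x s] s by force
    qed
    fix \<Omega> assume "\<Omega> \<in> (\<lambda>d. cball d s) ` D"
    then obtain d where d: "\<Omega> = cball d s" by auto
    \<comment> \<open>On a ball of radius \<open>s\<close> the set \<open>A - cball x s\<close> does not depend on \<open>x\<close>.\<close>
    have "emeasure (J x) (A - cball x s) = emeasure (J x) (A - \<Omega>)"
      if "x \<in> space (restrict_space borel \<Omega>)" for x
      using that d ultrametric_cball_eq[OF ultra, of x d s] by (simp add: space_restrict_space)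
    moreover have "(\<lambda>x. emeasure (J x) (A - \<Omega>)) \<in> borel_measurable (restrict_space borel \<Omega>)"
      using J_kernel[of "A - \<Omega>"] A d by (intro measurable_restrict_space1) auto
    ultimately show "(\<lambda>x. emeasure (J x) (A - cball x s)) \<in> borel_measurable (restrict_space borel \<Omega>)"
      by (subst measurable_cong) auto
  qed
qed

lemma measurable_density_outside_cball:
  fixes J :: "'a::{metric_space,second_countable_topology} \<Rightarrow> 'a measure"
  assumes ultra: "ultrametric TYPE('a)"
    and sets_J: "\<And>x. sets (J x) = sets borel"
    and J_kernel: "\<And>A. A \<in> sets borel \<Longrightarrow> (\<lambda>x. emeasure (J x) A) \<in> borel_measurable borel"
    and s: "0 < s" and c: "0 \<le> c"
    and bound: "\<And>x. ennreal c * emeasure (J x) (- cball x s) \<le> 1"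
  shows "(\<lambda>x. density (J x) (\<lambda>y. ennreal c * indicator (- cball x s) y))
           \<in> measurable borel (subprob_algebra borel)"
proof -
  let ?L = "\<lambda>x. density (J x) (\<lambda>y. ennreal c * indicator (- cball x s) y)"
  have emeasure_L: "emeasure (?L x) A = ennreal c * emeasure (J x) (A - cball x s)"
    if A: "A \<in> sets borel" for x A
  proof -
    have "(\<lambda>y. ennreal c * indicator (- cball x s) y) \<in> borel_measurable (J x)"
      by (simp add: measurable_cong_sets[OF sets_J refl])
    then have "emeasure (?L x) A
        = (\<integral>\<^sup>+y. ennreal c * indicator (- cball x s) y * indicator A y \<partial>J x)"
      using A sets_J[of x] by (simp add: emeasure_density)
    also have "\<dots> = (\<integral>\<^sup>+y. ennreal c * indicator (A - cball x s) y \<partial>J x)"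
      by (intro nn_integral_cong) (simp split: split_indicator)
    also have "\<dots> = ennreal c * emeasure (J x) (A - cball x s)"
      using A sets_J[of x] by (intro nn_integral_cmult_indicator) auto
    finally show ?thesis .
  qed
  show ?thesis
  proof (rule measurable_subprob_algebra)
    fix x
    show "sets (?L x) = sets borel" by (simp add: sets_J)
    then show "subprob_space (?L x)"
      using bound[of x] emeasure_L[of UNIV x] sets_eq_imp_space_eq[OF sets_J[of x]]
      by (intro subprob_spaceI) (auto simp: Compl_eq_Diff_UNIV)
  next
    fix A :: "'a set" assume "A \<in> sets borel"
    then show "(\<lambda>x. emeasure (?L x) A) \<in> borel_measurable borel"
      using measurable_emeasure_Diff_cball[OF ultra J_kernel _ s] by (simp add: emeasure_L)
  qed
qed

lemma measurable_nn_integral_outside_cball: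
  fixes J :: "'a::{metric_space,second_countable_topology} \<Rightarrow> 'a measure"
    and G :: "'a \<Rightarrow> 'a \<Rightarrow> ennreal"
  assumes ultra: "ultrametric TYPE('a)"
    and sets_J: "\<And>x. sets (J x) = sets borel"
    and J_kernel: "\<And>A. A \<in> sets borel \<Longrightarrow> (\<lambda>x. emeasure (J x) A) \<in> borel_measurable borel"
    and s: "0 < s" and bound: "\<And>x. emeasure (J x) (- cball x s) \<le> ennreal K"
    and G: "(\<lambda>(x, y). G x y) \<in> borel_measurable (borel \<Otimes>\<^sub>M borel)"
  shows "(\<lambda>x. \<integral>\<^sup>+y. indicator (- cball x s) y * G x y \<partial>J x) \<in> borel_measurable borel"
proof -
  define c where "c = 1 / (\<bar>K\<bar> + 1)"
  have c: "0 < c" "c * \<bar>K\<bar> \<le> 1" by (simp_all add: c_def field_simps)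
  have "ennreal c * emeasure (J x) (- cball x s) \<le> ennreal c * ennreal \<bar>K\<bar>" for x
    using bound[of x] by (intro mult_left_mono) (auto intro: order_trans ennreal_leI)
  also have "ennreal c * ennreal \<bar>K\<bar> \<le> 1"
    using c by (simp flip: ennreal_mult)
  finally have L: "(\<lambda>x. density (J x) (\<lambda>y. ennreal c * indicator (- cball x s) y))
      \<in> measurable borel (subprob_algebra borel)"
    using c by (intro measurable_density_outside_cball[OF ultra sets_J J_kernel s]) auto
  have G_section: "G x \<in> borel_measurable (J x)" for x
    using measurable_Pair2[OF G] by (simp add: measurable_cong_sets[OF sets_J refl])
  have ind: "(indicator (- cball x s) :: 'a \<Rightarrow> ennreal) \<in> borel_measurable (J x)" for x
    by (simp add: measurable_cong_sets[OF sets_J refl])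
  have "(\<integral>\<^sup>+y. G x y \<partial>density (J x) (\<lambda>y. ennreal c * indicator (- cball x s) y))
      = ennreal c * (\<integral>\<^sup>+y. indicator (- cball x s) y * G x y \<partial>J x)" for x
  proof -
    have "(\<lambda>y. ennreal c * indicator (- cball x s) y) \<in> borel_measurable (J x)"
      by (simp add: measurable_cong_sets[OF sets_J refl])
    then show ?thesis
      using G_section borel_measurable_times_ennreal[OF ind G_section]
      by (simp add: nn_integral_density nn_integral_cmult mult.assoc)
  qed
  then have "(\<lambda>x. ennreal (1 / c) * (ennreal c * (\<integral>\<^sup>+y. indicator (- cball x s) y * G x y \<partial>J x)))
      \<in> borel_measurable borel"
    using nn_integral_measurable_subprob_algebra2[OF G L] by simp
  moreover have "ennreal (1 / c) * ennreal c = 1"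
    using c by (simp flip: ennreal_mult)
  ultimately show ?thesis by (simp flip: mult.assoc)
qed

lemma nn_integral_eq_SUP_outside_cball:
  fixes M :: "'a::metric_space measure" and g :: "'a \<Rightarrow> ennreal"
  assumes sets_M: "sets M = sets borel" and g: "g \<in> borel_measurable M"
    and g_x: "g x = 0" and s0: "0 < s0"
  shows "(\<integral>\<^sup>+y. g y \<partial>M) = (SUP n. \<integral>\<^sup>+y. indicator (- cball x (s0 / Suc n)) y * g y \<partial>M)"
proof -
  have SUP_eq: "(SUP n. indicator (- cball x (s0 / Suc n)) y * g y) = g y" for y
  proof (cases "y = x")
    case False
    then have "0 < dist x y" by simp
    obtain n :: nat where "s0 / dist x y < Suc n"
      using reals_Archimedean2[of "s0 / dist x y"] by (meson less_trans of_nat_less_iff lessI)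
    with \<open>0 < dist x y\<close> have "s0 / Suc n < dist x y"
      by (simp add: divide_less_eq mult.commute)
    then have "g y \<le> (SUP n. indicator (- cball x (s0 / Suc n)) y * g y)"
      by (intro SUP_upper2[of n]) auto
    then show ?thesis
      by (intro order.antisym SUP_least) (auto split: split_indicator)
  qed (simp add: g_x)
  have "incseq (\<lambda>n y. indicator (- cball x (s0 / Suc n)) y * g y)"
  proof (intro incseq_SucI le_funI)
    fix n y
    have "s0 / Suc (Suc n) \<le> s0 / Suc n"
      using s0 by (intro divide_left_mono) auto
    then show "indicator (- cball x (s0 / Suc n)) y * g y
        \<le> indicator (- cball x (s0 / Suc (Suc n))) y * g y"
      by (auto split: split_indicator)
  qed
  then have "(\<integral>\<^sup>+y. (SUP n. indicator (- cball x (s0 / Suc n)) y * g y) \<partial>M)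
      = (SUP n. \<integral>\<^sup>+y. indicator (- cball x (s0 / Suc n)) y * g y \<partial>M)"
    by (intro nn_integral_monotone_convergence_SUP borel_measurable_times_ennreal g)
      (auto simp: measurable_cong_sets[OF sets_M refl] intro!: borel_measurable_indicator)
  then show ?thesis by (simp only: SUP_eq)
qed

lemma measurable_nn_integral_kernel:
  fixes J :: "'a::{metric_space,second_countable_topology} \<Rightarrow> 'a measure"
    and G :: "'a \<Rightarrow> 'a \<Rightarrow> ennreal"
  assumes ultra: "ultrametric TYPE('a)"
    and sets_J: "\<And>x. sets (J x) = sets borel"
    and J_kernel: "\<And>A. A \<in> sets borel \<Longrightarrow> (\<lambda>x. emeasure (J x) A) \<in> borel_measurable borel"
    and s0: "0 < s0"
    and bound: "\<And>s. 0 < s \<Longrightarrow> s \<le> s0 \<Longrightarrow> \<exists>K. \<forall>x. emeasure (J x) (- cball x s) \<le> ennreal K"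
    and G: "(\<lambda>(x, y). G x y) \<in> borel_measurable (borel \<Otimes>\<^sub>M borel)"
    and G_diag: "\<And>x. G x x = 0"
  shows "(\<lambda>x. \<integral>\<^sup>+y. G x y \<partial>J x) \<in> borel_measurable borel"
proof -
  have "(\<lambda>x. \<integral>\<^sup>+y. indicator (- cball x (s0 / Suc n)) y * G x y \<partial>J x) \<in> borel_measurable borel"
    for n
  proof -
    have "0 < s0 / Suc n" "s0 / Suc n \<le> s0"
      using s0 by (simp_all add: divide_le_eq)
    then obtain K where "\<And>x. emeasure (J x) (- cball x (s0 / Suc n)) \<le> ennreal K"
      using bound by blast
    with \<open>0 < s0 / Suc n\<close> show ?thesis
      by (intro measurable_nn_integral_outside_cball[OF ultra sets_J J_kernel _ _ G])
  qed
  moreover have "(\<integral>\<^sup>+y. G x y \<partial>J x) = (SUP n. \<integral>\<^sup>+y. indicator (- cball x (s0 / Suc n)) y * G x y \<partial>J x)"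
    for x
    using measurable_Pair2[OF G] s0 G_diag
    by (intro nn_integral_eq_SUP_outside_cball[OF sets_J])
      (simp_all add: measurable_cong_sets[OF sets_J refl])
  ultimately show ?thesis by simp
qed

lemma measurable_Etr_integrand:
  fixes u v :: "'a::{metric_space,second_countable_topology} \<Rightarrow> real"
  assumes [measurable]: "u \<in> borel_measurable borel" "v \<in> borel_measurable borel"
  shows "(\<lambda>(x, y). indicator (cball x \<rho>) y * ((u x - u y) * (v x - v y)))
           \<in> borel_measurable (borel \<Otimes>\<^sub>M borel)"
  unfolding indicator_def mem_cball split_beta' by measurable

lemma measurable_Etr_inner:
  fixes J :: "'a::{metric_space,second_countable_topology} \<Rightarrow> 'a measure"
    and u v :: "'a \<Rightarrow> real"
  assumes ultra: "ultrametric TYPE('a)"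
    and sets_J: "\<And>x. sets (J x) = sets borel"
    and J_kernel: "\<And>A. A \<in> sets borel \<Longrightarrow> (\<lambda>x. emeasure (J x) A) \<in> borel_measurable borel"
    and s0: "0 < s0"
    and bound: "\<And>s. 0 < s \<Longrightarrow> s \<le> s0 \<Longrightarrow> \<exists>K. \<forall>x. emeasure (J x) (- cball x s) \<le> ennreal K"
    and u: "u \<in> borel_measurable borel" and v: "v \<in> borel_measurable borel"
    and nonneg: "\<And>x y. 0 \<le> (u x - u y) * (v x - v y)"
  shows "(\<lambda>x. \<integral>y. indicator (cball x \<rho>) y * ((u x - u y) * (v x - v y)) \<partial>J x) \<in> borel_measurable borel"
proof -
  define g where "g x y = indicator (cball x \<rho>) y * ((u x - u y) * (v x - v y))" for x y
  have g: "(\<lambda>(x, y). g x y) \<in> borel_measurable (borel \<Otimes>\<^sub>M borel)"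
    unfolding g_def by (rule measurable_Etr_integrand[OF u v])
  have g_nonneg: "0 \<le> g x y" for x y
    using nonneg by (simp add: g_def)
  have "(\<integral>y. g x y \<partial>J x) = enn2real (\<integral>\<^sup>+y. ennreal (g x y) \<partial>J x)" for x
    using measurable_Pair2[OF g] g_nonneg
    by (intro integral_eq_nn_integral AE_I2) (simp_all add: measurable_cong_sets[OF sets_J refl])
  moreover have "(\<lambda>x. \<integral>\<^sup>+y. ennreal (g x y) \<partial>J x) \<in> borel_measurable borel"
    using g by (intro measurable_nn_integral_kernel[OF ultra sets_J J_kernel s0 bound])
      (simp_all add: g_def)
  ultimately show ?thesis by (simp add: g_def)
qed

section \<open>Comparison of truncated forms\<close>

lemma integral_sandwich:
  fixes g h :: "'b \<Rightarrow> real"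
  assumes g: "g \<in> borel_measurable M" and h: "h \<in> borel_measurable M"
    and g_nonneg: "\<And>x. x \<in> space M \<Longrightarrow> 0 \<le> g x"
    and g_le_h: "\<And>x. x \<in> space M \<Longrightarrow> g x \<le> h x"
    and h_le_g: "\<And>x. x \<in> space M \<Longrightarrow> h x \<le> c * g x"
    and c: "0 < c"
  shows "integral\<^sup>L M h \<le> c * integral\<^sup>L M g" "integral\<^sup>L M g \<le> integral\<^sup>L M h"
proof -
  have h_nonneg: "0 \<le> h x" if "x \<in> space M" for x
    using g_nonneg[OF that] g_le_h[OF that] by linarith
  \<comment> \<open>If \<open>g\<close> and \<open>h\<close> are not integrable, both Bochner integrals are \<open>0\<close>.\<close>
  have integrable_iff: "integrable M g \<longleftrightarrow> integrable M h"
  proof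
    assume "integrable M g"
    then have "integrable M (\<lambda>x. c * g x)" by simp
    from Bochner_Integration.integrable_bound[OF this h] show "integrable M h"
      using c g_nonneg h_nonneg h_le_g by (auto intro: AE_I2)
  next
    assume "integrable M h"
    then show "integrable M g"
      using g_nonneg g_le_h h_nonneg
      by (intro Bochner_Integration.integrable_bound[OF _ g] AE_I2) auto
  qed
  show "integral\<^sup>L M h \<le> c * integral\<^sup>L M g"
  proof (cases "integrable M g")
    case True
    then have "integral\<^sup>L M h \<le> integral\<^sup>L M (\<lambda>x. c * g x)"
      using integrable_iff h_le_g by (intro integral_mono) auto
    then show ?thesis by simp
  qed (use integrable_iff in \<open>simp add: not_integrable_integral_eq\<close>)
  show "integral\<^sup>L M g \<le> integral\<^sup>L M h"
  proof (cases "integrable M g")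
    case True
    then show ?thesis using integrable_iff g_le_h by (intro integral_mono) auto
  qed (use integrable_iff in \<open>simp add: not_integrable_integral_eq\<close>)
qed

lemma Etr_exp_indicator_cball_weights:
  fixes mu :: "'a::metric_space measure" and u v :: "'a \<Rightarrow> real"
  assumes ultra: "ultrametric TYPE('a)" and "\<rho> \<le> r"
  shows "Etr mu J \<rho> (\<lambda>x. exp (- (lam * indicator (cball x0 r) x)) * u x)
                   (\<lambda>x. exp (lam * indicator (cball x0 r) x) * v x)
         = Etr mu J \<rho> u v"
  unfolding Etr_def
proof (intro Bochner_Integration.integral_cong refl)
  fix x y
  let ?t = "lam * indicator (cball x0 r) x"
  have "y \<in> cball x \<rho> \<Longrightarrow> indicator (cball x0 r) y = (indicator (cball x0 r) x :: real)"
    using ultrametric_indicator_cball_eq[OF ultra, of y x r x0] \<open>\<rho> \<le> r\<close> by (simp add: dist_commute)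
  moreover have "exp (- ?t) * exp ?t = 1" by (simp flip: exp_add)
  moreover have "(exp (- ?t) * u x - exp (- ?t) * u y) * (exp ?t * v x - exp ?t * v y)
      = (exp (- ?t) * exp ?t) * ((u x - u y) * (v x - v y))"
    by (simp add: algebra_simps)
  ultimately show "indicator (cball x \<rho>) y *
      ((exp (- ?t) * u x - exp (- (lam * indicator (cball x0 r) y)) * u y) *
       (exp ?t * v x - exp (lam * indicator (cball x0 r) y) * v y))
    = indicator (cball x \<rho>) y * ((u x - u y) * (v x - v y))"
    by (cases "y \<in> cball x \<rho>") simp_all
qed

lemma Etr_powr_ge:
  fixes mu :: "('a::{metric_space,second_countable_topology}) measure"
    and J :: "'a \<Rightarrow> 'a measure" and f :: "'a \<Rightarrow> real"
  assumes ultra: "ultrametric TYPE('a)"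
    and sets_mu: "sets mu = sets borel"
    and sets_J: "\<And>x. sets (J x) = sets borel"
    and J_kernel: "\<And>A. A \<in> sets borel \<Longrightarrow> (\<lambda>x. emeasure (J x) A) \<in> borel_measurable borel"
    and s0: "0 < s0"
    and bound: "\<And>s. 0 < s \<Longrightarrow> s \<le> s0 \<Longrightarrow> \<exists>K. \<forall>x. emeasure (J x) (- cball x s) \<le> ennreal K"
    and f: "f \<in> borel_measurable borel" and f_nonneg: "\<And>x. 0 \<le> f x"
    and p: "1 \<le> p"
  shows "(1 / p) * Etr mu J \<rho> (\<lambda>x. f x powr p) (\<lambda>x. f x powr p)
         \<le> Etr mu J \<rho> f (\<lambda>x. f x powr (2 * p - 1))"
proof -
  define g where "g x y = indicator (cball x \<rho>) y * ((f x - f y) * (f x powr (2 * p - 1) - f y powr (2 * p - 1)))"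
    for x y
  define h where "h x y = indicator (cball x \<rho>) y * ((f x powr p - f y powr p) * (f x powr p - f y powr p))"
    for x y
  have g_nonneg: "0 \<le> (f x - f y) * (f x powr (2 * p - 1) - f y powr (2 * p - 1))" for x y
  proof -
    have "0 \<le> p * ((f x - f y) * (f x powr (2 * p - 1) - f y powr (2 * p - 1)))"
      using powr_diff_sq_le_mult_diff_powr[OF f_nonneg f_nonneg p, of x y]
      by (rule order_trans[OF zero_le_power2])
    then show ?thesis using p by (simp add: zero_le_mult_iff)
  qed
  have pointwise: "0 \<le> g x y" "g x y \<le> h x y" "h x y \<le> p * g x y" for x y
    using g_nonneg[of x y] powr_diff_sq_le_mult_diff_powr[OF f_nonneg f_nonneg p, of x y]
      mult_diff_powr_le_powr_diff_sq[OF f_nonneg f_nonneg, of x y p]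
    by (auto simp: g_def h_def power2_eq_square split: split_indicator)
  have f_powr: "(\<lambda>x. f x powr q) \<in> borel_measurable borel" for q
    using f by measurable
  have sections: "g x \<in> borel_measurable (J x)" "h x \<in> borel_measurable (J x)" for x
    using measurable_Pair2[OF measurable_Etr_integrand[OF f f_powr, of \<rho>]]
      measurable_Pair2[OF measurable_Etr_integrand[OF f_powr f_powr, of \<rho>]]
    by (simp_all add: g_def[abs_def] h_def[abs_def] measurable_cong_sets[OF sets_J refl])
  have inner: "(\<integral>y. g x y \<partial>J x) \<le> (\<integral>y. h x y \<partial>J x)" "(\<integral>y. h x y \<partial>J x) \<le> p * (\<integral>y. g x y \<partial>J x)"
    "0 \<le> (\<integral>y. g x y \<partial>J x)" for x
    using integral_sandwich[OF sections pointwise] p by (auto intro: integral_nonneg_AE AE_I2 pointwise)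
  have "(\<lambda>x. \<integral>y. g x y \<partial>J x) \<in> borel_measurable mu" "(\<lambda>x. \<integral>y. h x y \<partial>J x) \<in> borel_measurable mu"
    using measurable_Etr_inner[OF ultra sets_J J_kernel s0 bound f f_powr g_nonneg]
      measurable_Etr_inner[OF ultra sets_J J_kernel s0 bound f_powr f_powr]
    by (simp_all add: g_def h_def measurable_cong_sets[OF sets_mu refl])
  from integral_sandwich(1)[OF this inner(3,1,2)] p
  have "(\<integral>x. \<integral>y. h x y \<partial>J x \<partial>mu) \<le> p * (\<integral>x. \<integral>y. g x y \<partial>J x \<partial>mu)" by simp
  with p show ?thesis
    by (simp add: Etr_def g_def h_def divide_le_eq mult.commute)
qed

theorem corollary1:
  fixes mu :: "('a::{metric_space, second_countable_topology}) measure"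
    and J :: "'a \<Rightarrow> 'a measure"
    and \<beta> :: real and R0 :: ereal
    and x0 :: 'a and r \<rho> lam p :: real and f :: "'a \<Rightarrow> real"
  assumes ultra: "ultrametric TYPE('a)"
    and loc_compact: "locally_compact_space (euclidean :: 'a topology)"
    and sets_mu: "sets mu = sets borel"
    and radon: "\<And>K. compact K \<Longrightarrow> emeasure mu K < \<infinity>"
    and full_supp: "\<And>U. open U \<Longrightarrow> U \<noteq> {} \<Longrightarrow> emeasure mu U > 0"
    and sets_J: "\<And>x. sets (J x) = sets borel"
    and J_kernel: "\<And>A. A \<in> sets borel \<Longrightarrow> (\<lambda>x. emeasure (J x) A) \<in> borel_measurable borel"
    and J_offdiag: "\<And>x. emeasure (J x) {x} = 0"
    and j_sym: "\<And>A B. A \<in> sets borel \<Longrightarrow> B \<in> sets borel \<Longrightarrow>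
        (\<integral>\<^sup>+x. indicator A x * emeasure (J x) B \<partial>mu) = (\<integral>\<^sup>+x. indicator B x * emeasure (J x) A \<partial>mu)"
    and j_ball: "\<And>x r. 0 < r \<Longrightarrow>
        (\<integral>\<^sup>+y. indicator (cball x r) y * emeasure (J y) (- cball x r) \<partial>mu) < \<infinity>"
    and beta_pos: "0 < \<beta>"
    and R0_pos: "0 < R0"
    and R0_le_diam: "R0 \<le> (SUP x\<in>(UNIV::'a set). SUP y\<in>(UNIV::'a set). ereal (dist x y))"
    and TJ: "\<exists>C::real. \<forall>x. \<forall>s. 0 < s \<and> ereal s < R0 \<longrightarrow>
        emeasure (J x) (- cball x s) \<le> ennreal (C * s powr (- \<beta>))"
    and r_pos: "0 < r"
    and rho: "0 < \<rho>" "\<rho> \<le> r"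
    and p: "1 \<le> p"
    and f_nonneg: "\<And>x. 0 \<le> f x"
    and f_F: "f \<in> domF mu J"
    and f_Linf: "\<exists>K. AE x in mu. \<bar>f x\<bar> \<le> K"
  shows "Etr mu J \<rho> (\<lambda>x. exp (- (lam * indicator (cball x0 r) x)) * f x)
                     (\<lambda>x. exp (lam * indicator (cball x0 r) x) * f x powr (2 * p - 1))
         \<ge> (1 / p) * Etr mu J \<rho> (\<lambda>x. f x powr p) (\<lambda>x. f x powr p)"
proof -
  have f: "f \<in> borel_measurable borel"
    using f_F by (simp add: domF_def measurable_cong_sets[OF sets_mu refl])
  obtain C :: real where C: "\<And>x s. 0 < s \<Longrightarrow> ereal s < R0 \<Longrightarrow>
      emeasure (J x) (- cball x s) \<le> ennreal (C * s powr (- \<beta>))"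
    using TJ by metis
  obtain s0 where s0: "0 < s0" "ereal s0 < R0"
    using ereal_dense2[OF R0_pos] by auto
  have "\<exists>K. \<forall>x. emeasure (J x) (- cball x s) \<le> ennreal K" if "0 < s" "s \<le> s0" for s
    using C[OF \<open>0 < s\<close>] s0(2) \<open>s \<le> s0\<close> by (meson ereal_less_eq(3) le_less_trans)
  from Etr_powr_ge[OF ultra sets_mu sets_J J_kernel s0(1) this f f_nonneg p]
  show ?thesis
    unfolding Etr_exp_indicator_cball_weights[OF ultra rho(2)] by simp
qed

end
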